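(* Let $m\ge 6$ be an integer and let $G^*$ be a graph attaining the maximum spectral radius among all minimally 2-edge-connected graphs with $m$ edges. Then $\rho(G^* )>\sqrt{m-2}$.
   Context: Graphs are finite and simple. $\rho(G)$ denotes the largest eigenvalue of the adjacency matrix of $G$. A graph is minimally 2-edge-connected if it is 2-edge-connected but deleting any one edge leaves a graph that is not 2-edge-connected. *)

theory Defs
  imports Main "HOL-Analysis.Analysis"
begin

text \<open>A finite simple graph: a finite vertex set V (vertices are natural numbers,
  so every finite graph is represented up to isomorphism) and a set E of edges,
  each edge being a 2-element subset of V.\<close>

definition simple_graph :: "nat set \<Rightarrow> nat set set \<Rightarrow> bool" where
  "simple_graph V E \<longleftrightarrow> finite V \<and>
     (\<forall>e\<in>E. \<exists>u v. u \<noteq> v \<and> u \<in> V \<and> v \<in> V \<and> e = {u, v})"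

definition adj :: "nat set set \<Rightarrow> nat \<Rightarrow> nat \<Rightarrow> bool" where
  "adj E u v \<longleftrightarrow> {u, v} \<in> E \<and> u \<noteq> v"

definition connected_graph :: "nat set \<Rightarrow> nat set set \<Rightarrow> bool" where
  "connected_graph V E \<longleftrightarrow> V \<noteq> {} \<and>
     (\<forall>u\<in>V. \<forall>v\<in>V. (adj E)\<^sup>*\<^sup>* u v)"

definition two_edge_connected :: "nat set \<Rightarrow> nat set set \<Rightarrow> bool" where
  "two_edge_connected V E \<longleftrightarrow> simple_graph V E \<and> connected_graph V E \<and>
     (\<forall>e\<in>E. connected_graph V (E - {e}))"

definition minimally_two_edge_connected :: "nat set \<Rightarrow> nat set set \<Rightarrow> bool" where
  "minimally_two_edge_connected V E \<longleftrightarrow> two_edge_connected V E \<and>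
     (\<forall>e\<in>E. \<not> two_edge_connected V (E - {e}))"

definition adj_eigenvalue :: "nat set \<Rightarrow> nat set set \<Rightarrow> real \<Rightarrow> bool" where
  "adj_eigenvalue V E r \<longleftrightarrow> (\<exists>x :: nat \<Rightarrow> real.
     (\<exists>v\<in>V. x v \<noteq> 0) \<and>
     (\<forall>v\<in>V. (\<Sum>u\<in>{u\<in>V. adj E v u}. x u) = r * x v))"

definition spectral_radius :: "nat set \<Rightarrow> nat set set \<Rightarrow> real" where
  "spectral_radius V E = Max {r. adj_eigenvalue V E r}"

end

theory Submission
  imports Defs "Jordan_Normal_Form.Char_Poly"
begin

text \<open>It suffices to exhibit, for every \<open>m \<ge> 6\<close>, one minimally 2-edge-connected graph with
  \<open>m\<close> edges and an adjacency eigenvalue above \<open>\<surd>(m - 2)\<close>, since \<open>\<rho>\<close> dominates every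
  eigenvalue. For \<open>m = 2k\<close> take \<open>K\<^sub>2\<^sub>,\<^sub>k\<close>, whose Perron vector (1 on the two hubs, \<open>\<surd>(2k)/k\<close>
  elsewhere) gives \<open>\<rho> = \<surd>(2k) = \<surd>m\<close>. For \<open>m = 2n + 3\<close> attach a triangle to one hub of
  \<open>K\<^sub>2\<^sub>,\<^sub>n\<close>; an eigenvector that is constant on each orbit of the automorphism group exists
  for every root \<open>r > \<surd>n\<close> of a quartic, and that quartic is negative at \<open>\<surd>(2n+1)\<close> and positive at
  \<open>2n+1\<close>. Both graphs are minimally 2-edge-connected because every edge has an end of
  degree 2.\<close>

definition adj_mat :: "nat set \<Rightarrow> nat set set \<Rightarrow> real mat" where
  "adj_mat V E = mat (card V) (card V)
     (\<lambda>(i, j). if adj E (sorted_list_of_set V ! i) (sorted_list_of_set V ! j) then 1 else 0)"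

lemma adj_eigenvalue_imp_eigenvalue_adj_mat:
  assumes fin: "finite V" and eig: "adj_eigenvalue V E r"
  shows "eigenvalue (adj_mat V E) r"
proof -
  define xs where "xs = sorted_list_of_set V"
  define n where "n = card V"
  have dist: "distinct xs" and setxs: "set xs = V" and len: "length xs = n"
    using fin by (simp_all add: xs_def n_def)
  have bij: "bij_betw (\<lambda>j. xs ! j) {0..<n} V"
    using bij_betw_nth[OF dist, of "{0..<n}" V] setxs len by (simp add: atLeast0LessThan)
  obtain x :: "nat \<Rightarrow> real" where nz: "\<exists>v\<in>V. x v \<noteq> 0"
    and eq: "\<forall>v\<in>V. (\<Sum>u\<in>{u\<in>V. adj E v u}. x u) = r * x v"
    using eig unfolding adj_eigenvalue_def by auto
  define w where "w = vec n (\<lambda>i. x (xs ! i))"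
  have A: "adj_mat V E \<in> carrier_mat n n" by (simp add: adj_mat_def n_def)
  have "adj_mat V E *\<^sub>v w = r \<cdot>\<^sub>v w"
  proof (rule eq_vecI)
    fix i assume "i < dim_vec (r \<cdot>\<^sub>v w)"
    hence i: "i < n" by (simp add: w_def)
    hence xi: "xs ! i \<in> V" using setxs len by auto
    have "vec_index (adj_mat V E *\<^sub>v w) i =
        (\<Sum>j\<in>{0..<n}. (if adj E (xs ! i) (xs ! j) then 1 else 0) * x (xs ! j))"
      using i unfolding adj_mat_def xs_def[symmetric] n_def[symmetric]
      by (simp add: w_def mult_mat_vec_def scalar_prod_def row_def)
    also have "\<dots> = (\<Sum>j\<in>{0..<n}. (\<lambda>u. if adj E (xs ! i) u then x u else 0) (xs ! j))"
      by (rule sum.cong) auto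
    also have "\<dots> = (\<Sum>u\<in>V. if adj E (xs ! i) u then x u else 0)"
      by (rule sum.reindex_bij_betw[OF bij])
    also have "\<dots> = (\<Sum>u\<in>{u\<in>V. adj E (xs ! i) u}. x u)"
      using fin by (simp add: sum.inter_filter)
    also have "\<dots> = r * x (xs ! i)" using eq xi by auto
    finally show "vec_index (adj_mat V E *\<^sub>v w) i = vec_index (r \<cdot>\<^sub>v w) i" using i by (simp add: w_def)
  qed (simp add: adj_mat_def n_def w_def)
  moreover have "w \<noteq> 0\<^sub>v n"
  proof
    assume w0: "w = 0\<^sub>v n"
    from nz obtain v where v: "v \<in> V" "x v \<noteq> 0" by auto
    then obtain j where j: "j < n" "xs ! j = v" using setxs len by (metis in_set_conv_nth)
    have "vec_index w j = 0" using w0 j by simp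
    thus False using j v by (simp add: w_def)
  qed
  moreover have "w \<in> carrier_vec n" by (simp add: w_def)
  ultimately show ?thesis
    using A unfolding eigenvalue_def eigenvector_def by auto
qed

lemma finite_adj_eigenvalues:
  assumes "finite V"
  shows "finite {r. adj_eigenvalue V E r}"
proof -
  have A: "adj_mat V E \<in> carrier_mat (card V) (card V)" by (simp add: adj_mat_def)
  have "char_poly (adj_mat V E) \<noteq> 0" using degree_monic_char_poly[OF A] by auto
  moreover have "{r. adj_eigenvalue V E r} \<subseteq> {r. poly (char_poly (adj_mat V E)) r = 0}"
    using adj_eigenvalue_imp_eigenvalue_adj_mat[OF assms] eigenvalue_root_char_poly[OF A] by auto
  ultimately show ?thesis using poly_roots_finite finite_subset by blast
qed

lemma adj_eigenvalue_le_spectral_radius: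
  assumes "finite V" "adj_eigenvalue V E r"
  shows "r \<le> spectral_radius V E"
  unfolding spectral_radius_def using finite_adj_eigenvalues[OF assms(1)] assms(2) by auto

lemma adj_commute: "adj E u v = adj E v u"
  by (auto simp: adj_def insert_commute)

lemma reachable_sym: "(adj E)\<^sup>*\<^sup>* u v \<Longrightarrow> (adj E)\<^sup>*\<^sup>* v u"
  by (induction rule: rtranclp_induct) (simp, metis adj_commute converse_rtranclp_into_rtranclp)

lemma reachable_edge:
  "(adj F)\<^sup>*\<^sup>* x u \<Longrightarrow> {u, v} \<in> F \<Longrightarrow> u \<noteq> v \<Longrightarrow> (adj F)\<^sup>*\<^sup>* x v"
  by (simp add: adj_def rtranclp.rtrancl_into_rtrancl)

lemma reachable_mono: "(adj F)\<^sup>*\<^sup>* u v \<Longrightarrow> F \<subseteq> G \<Longrightarrow> (adj G)\<^sup>*\<^sup>* u v"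
  by (induction rule: rtranclp_induct) (auto simp: adj_def intro: reachable_edge)

lemma connected_graphI:
  assumes "r \<in> V" "\<And>v. v \<in> V \<Longrightarrow> (adj E)\<^sup>*\<^sup>* r v"
  shows "connected_graph V E"
  unfolding connected_graph_def using assms by (meson empty_iff reachable_sym rtranclp_trans)

lemma simple_graph_iff: "simple_graph V E \<longleftrightarrow> finite V \<and> (\<forall>e\<in>E. card e = 2 \<and> e \<subseteq> V)"
proof -
  have "(\<exists>u v. u \<noteq> v \<and> u \<in> V \<and> v \<in> V \<and> e = {u, v}) \<longleftrightarrow> card e = 2 \<and> e \<subseteq> V" for e :: "nat set"
    unfolding card_2_iff by auto
  thus ?thesis unfolding simple_graph_def by simp
qed

text \<open>If \<open>f\<close> is the only edge at \<open>w\<close> (or there is none), then \<open>w\<close> is isolated in \<open>F - {f}\<close>.\<close>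
lemma not_two_edge_connected_if_degree_le_one:
  assumes "w \<in> V" "z \<in> V" "z \<noteq> w" "\<forall>e\<in>F. w \<in> e \<longrightarrow> e = f"
  shows "\<not> two_edge_connected V F"
proof
  assume "two_edge_connected V F"
  hence "connected_graph V (F - {f})"
    unfolding two_edge_connected_def by (cases "f \<in> F") auto
  hence "(adj (F - {f}))\<^sup>*\<^sup>* w z" using assms(1,2) unfolding connected_graph_def by auto
  thus False
    by (cases rule: converse_rtranclpE) (use assms(3,4) in \<open>auto simp: adj_def\<close>)
qed

lemma minimally_two_edge_connectedI:
  assumes "simple_graph V E" "r \<in> V"
    and reach: "\<And>e v. v \<in> V \<Longrightarrow> (adj (E - {e}))\<^sup>*\<^sup>* r v"
    and pendant: "\<And>e. e \<in> E \<Longrightarrow> \<exists>w\<in>V - {r}. \<exists>f. \<forall>e'\<in>E - {e}. w \<in> e' \<longrightarrow> e' = f"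
  shows "minimally_two_edge_connected V E"
proof -
  have "connected_graph V E"
    using assms(2) reachable_mono[OF reach] by (intro connected_graphI) auto
  moreover have "connected_graph V (E - {e})" for e
    using assms(2) reach by (rule connected_graphI)
  moreover have "\<not> two_edge_connected V (E - {e})" if "e \<in> E" for e
    using pendant[OF that] not_two_edge_connected_if_degree_le_one[of _ V r] assms(2) by blast
  ultimately show ?thesis
    using assms(1) unfolding minimally_two_edge_connected_def two_edge_connected_def by simp
qed

definition K2 :: "nat \<Rightarrow> nat set set" where
  "K2 k = (\<lambda>c. {0, c}) ` {2..k+1} \<union> (\<lambda>c. {1, c}) ` {2..k+1}"

lemma K2_cases [consumes 1, case_names hub0 hub1]:
  assumes "e \<in> K2 k"
  obtains c where "c \<in> {2..k+1}" "e = {0, c}" | c where "c \<in> {2..k+1}" "e = {1, c}"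
  using assms unfolding K2_def by auto

lemma doubleton_in_K2_iff:
  "{a, u} \<in> K2 k \<longleftrightarrow> (a \<le> 1 \<and> u \<in> {2..k+1}) \<or> (u \<le> 1 \<and> a \<in> {2..k+1})"
proof
  assume "{a, u} \<in> K2 k"
  thus "(a \<le> 1 \<and> u \<in> {2..k+1}) \<or> (u \<le> 1 \<and> a \<in> {2..k+1})"
    by (cases rule: K2_cases) (auto simp: doubleton_eq_iff)
next
  have hub_edges: "{0, c} \<in> K2 k" "{1, c} \<in> K2 k" if "c \<in> {2..k+1}" for c
    unfolding K2_def using that by auto
  assume "(a \<le> 1 \<and> u \<in> {2..k+1}) \<or> (u \<le> 1 \<and> a \<in> {2..k+1})"
  thus "{a, u} \<in> K2 k"
  proof (elim disjE conjE)
    assume "a \<le> 1" "u \<in> {2..k+1}"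
    thus ?thesis using hub_edges[of u] by (cases a) auto
  next
    assume "u \<le> 1" "a \<in> {2..k+1}"
    thus ?thesis using hub_edges[of a] by (cases u) (auto simp: insert_commute)
  qed
qed

lemma card_K2: "card (K2 k) = 2 * k"
proof -
  have inj: "inj_on (\<lambda>c. {a, c}) {2..k+1}" for a :: nat
    by (auto simp: inj_on_def doubleton_eq_iff)
  have "0 \<notin> {1, c}" if "c \<in> {2..k+1}" for c :: nat
    using that by simp
  hence "(\<lambda>c. {0, c}) ` {2..k+1} \<inter> (\<lambda>c. {1, c}) ` {2..k+1} = {}"
    by blast
  hence "card (K2 k) = card ((\<lambda>c. {0, c}) ` {2..k+1}) + card ((\<lambda>c. {1, c}) ` {2..k+1})"
    unfolding K2_def by (intro card_Un_disjoint) auto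
  thus ?thesis using card_image[OF inj] by simp
qed

lemma simple_graph_K2: "simple_graph {0..k+1} (K2 k)"
  unfolding simple_graph_iff K2_def by auto

lemma K2_edge_subset: "e \<in> K2 k \<Longrightarrow> e \<subseteq> {0..k+1}"
  using simple_graph_K2 unfolding simple_graph_iff by blast

lemma K2_minus_edge_reachable:
  assumes "2 \<le> k" "v \<in> {0..k+1}"
  shows "(adj (K2 k - {e}))\<^sup>*\<^sup>* 0 v"
proof -
  obtain c where c: "c \<in> {2..k+1}" "{0, c} \<noteq> e" "{1, c} \<noteq> e"
  proof (cases "e = {0, 2} \<or> e = {1, 2}")
    case True
    thus ?thesis using assms(1) by (intro that[of 3]) (auto simp: doubleton_eq_iff)
  next
    case False
    thus ?thesis using assms(1) by (intro that[of 2]) auto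
  qed
  have "(adj (K2 k - {e}))\<^sup>*\<^sup>* 0 c"
    by (rule reachable_edge[OF rtranclp.rtrancl_refl]) (use c in \<open>auto simp: doubleton_in_K2_iff\<close>)
  hence hubs: "(adj (K2 k - {e}))\<^sup>*\<^sup>* 0 1"
    by (rule reachable_edge) (use c in \<open>auto simp: doubleton_in_K2_iff insert_commute\<close>)
  show ?thesis
  proof (cases "v \<le> 1")
    case True
    thus ?thesis using hubs by (auto simp: le_Suc_eq)
  next
    case False
    hence leaf: "v \<in> {2..k+1}" using assms(2) by auto
    show ?thesis
    proof (cases "e = {0, v}")
      case True
      show ?thesis
        by (rule reachable_edge[OF hubs]) (use True leaf in \<open>auto simp: doubleton_in_K2_iff doubleton_eq_iff\<close>)
    next
      case False
      show ?thesis
        by (rule reachable_edge[OF rtranclp.rtrancl_refl]) (use False leaf in \<open>auto simp: doubleton_in_K2_iff\<close>)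
    qed
  qed
qed

lemma minimally_two_edge_connected_K2:
  assumes "2 \<le> k"
  shows "minimally_two_edge_connected {0..k+1} (K2 k)"
proof (rule minimally_two_edge_connectedI[OF simple_graph_K2, of 0])
  fix e assume "e \<in> K2 k"
  thus "\<exists>w\<in>{0..k+1} - {0}. \<exists>f. \<forall>e'\<in>K2 k - {e}. w \<in> e' \<longrightarrow> e' = f"
  proof (cases rule: K2_cases)
    case (hub0 c)
    thus ?thesis by (intro bexI[of _ c] exI[of _ "{1, c}"]) (auto simp: K2_def)
  next
    case (hub1 c)
    thus ?thesis by (intro bexI[of _ c] exI[of _ "{0, c}"]) (auto simp: K2_def)
  qed
qed (use K2_minus_edge_reachable[OF assms] in auto)

definition K2_triangle :: "nat \<Rightarrow> nat set set" where
  "K2_triangle n = K2 n \<union> {{0, n+2}, {0, n+3}, {n+2, n+3}}"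

lemma card_K2_triangle: "card (K2_triangle n) = 2 * n + 3"
proof -
  define T :: "nat set set" where "T = {{0, n+2}, {0, n+3}, {n+2, n+3}}"
  have "K2 n \<inter> T = {}" unfolding T_def using K2_edge_subset by fastforce
  hence "card (K2 n \<union> T) = card (K2 n) + card T"
    by (intro card_Un_disjoint) (simp_all add: K2_def T_def)
  moreover have "card T = 3" by (simp add: T_def doubleton_eq_iff)
  ultimately show ?thesis by (simp add: K2_triangle_def T_def card_K2)
qed

lemma simple_graph_K2_triangle: "simple_graph {0..n+3} (K2_triangle n)"
  unfolding simple_graph_iff K2_triangle_def K2_def by auto

lemma K2_triangle_minus_edge_reachable:
  assumes "2 \<le> n" "v \<in> {0..n+3}"
  shows "(adj (K2_triangle n - {e}))\<^sup>*\<^sup>* 0 v"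
proof (cases "v \<le> n + 1")
  case True
  have "(adj (K2 n - {e}))\<^sup>*\<^sup>* 0 v" using K2_minus_edge_reachable[OF assms(1)] True by simp
  thus ?thesis by (rule reachable_mono) (auto simp: K2_triangle_def)
next
  case False
  define w where "w = (if v = n + 2 then n + 3 else n + 2)"
  have triangle: "v \<in> {n+2, n+3}" "w \<in> {n+2, n+3}" "w \<noteq> v"
    using False assms(2) by (auto simp: w_def)
  hence edges: "{0, v} \<in> K2_triangle n" "{0, w} \<in> K2_triangle n" "{w, v} \<in> K2_triangle n"
    by (auto simp: K2_triangle_def insert_commute)
  show ?thesis
  proof (cases "e = {0, v}")
    case True
    have "(adj (K2_triangle n - {e}))\<^sup>*\<^sup>* 0 w"
      by (rule reachable_edge[OF rtranclp.rtrancl_refl]) (use True triangle edges in \<open>auto simp: doubleton_eq_iff\<close>)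
    thus ?thesis
      by (rule reachable_edge) (use True triangle edges in \<open>auto simp: doubleton_eq_iff\<close>)
  next
    case False
    show ?thesis
      by (rule reachable_edge[OF rtranclp.rtrancl_refl]) (use False triangle edges in auto)
  qed
qed

lemma minimally_two_edge_connected_K2_triangle:
  assumes "2 \<le> n"
  shows "minimally_two_edge_connected {0..n+3} (K2_triangle n)"
proof (rule minimally_two_edge_connectedI[OF simple_graph_K2_triangle, of 0])
  fix e assume e: "e \<in> K2_triangle n"
  show "\<exists>w\<in>{0..n+3} - {0}. \<exists>f. \<forall>e'\<in>K2_triangle n - {e}. w \<in> e' \<longrightarrow> e' = f"
  proof (cases "e \<in> K2 n")
    case True
    thus ?thesis
    proof (cases rule: K2_cases)
      case (hub0 c)
      thus ?thesis by (intro bexI[of _ c] exI[of _ "{1, c}"]) (auto simp: K2_triangle_def K2_def)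
    next
      case (hub1 c)
      thus ?thesis by (intro bexI[of _ c] exI[of _ "{0, c}"]) (auto simp: K2_triangle_def K2_def)
    qed
  next
    case False
    have top_free: "n+2 \<notin> e'" "n+3 \<notin> e'" if "e' \<in> K2 n" for e'
      using K2_edge_subset[OF that] by auto
    from False e consider "e = {0, n+2}" | "e = {0, n+3}" | "e = {n+2, n+3}"
      by (auto simp: K2_triangle_def)
    thus ?thesis
    proof cases
      case 1
      show ?thesis by (intro bexI[of _ "n+2"] exI[of _ "{n+2, n+3}"])
        (use 1 top_free in \<open>auto simp: K2_triangle_def\<close>)
    next
      case 2
      show ?thesis by (intro bexI[of _ "n+3"] exI[of _ "{n+2, n+3}"])
        (use 2 top_free in \<open>auto simp: K2_triangle_def\<close>)
    next
      case 3
      show ?thesis by (intro bexI[of _ "n+2"] exI[of _ "{0, n+2}"])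
        (use 3 top_free in \<open>auto simp: K2_triangle_def\<close>)
    qed
  qed
qed (use K2_triangle_minus_edge_reachable[OF assms] in auto)

lemma K2_neighbours_hub: "a \<le> 1 \<Longrightarrow> {u \<in> {0..k+1}. adj (K2 k) a u} = {2..k+1}"
  by (auto simp: adj_def doubleton_in_K2_iff)

lemma K2_neighbours_leaf: "c \<in> {2..k+1} \<Longrightarrow> {u \<in> {0..k+1}. adj (K2 k) c u} = {0, 1}"
  by (auto simp: adj_def doubleton_in_K2_iff)

lemma adj_eigenvalue_K2:
  assumes "1 \<le> k"
  shows "adj_eigenvalue {0..k+1} (K2 k) (sqrt (2 * k))"
proof -
  define r where "r = sqrt (2 * k)"
  define x where "x = (\<lambda>v::nat. if v \<le> 1 then 1 else r / k)"
  have "(\<Sum>u\<in>{u\<in>{0..k+1}. adj (K2 k) v u}. x u) = r * x v" if "v \<in> {0..k+1}" for v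
  proof (cases "v \<le> 1")
    case True
    have "(\<Sum>u\<in>{2..k+1}. x u) = (\<Sum>u\<in>{2..k+1}. r / k)" by (rule sum.cong) (auto simp: x_def)
    thus ?thesis unfolding K2_neighbours_hub[OF True] using True assms by (simp add: x_def)
  next
    case False
    have "r * r = 2 * k" by (simp add: r_def)
    moreover have "v \<in> {2..k+1}" using False that by auto
    ultimately show ?thesis unfolding K2_neighbours_leaf[OF \<open>v \<in> {2..k+1}\<close>]
      using False assms by (simp add: x_def field_simps)
  qed
  moreover have "x 0 \<noteq> 0" by (simp add: x_def)
  ultimately show ?thesis unfolding adj_eigenvalue_def r_def by (intro exI[of _ x]) force
qed

lemma K2_triangle_neighbours:
  "{u \<in> {0..n+3}. adj (K2_triangle n) 0 u} = {2..n+3}"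
  "{u \<in> {0..n+3}. adj (K2_triangle n) 1 u} = {2..n+1}"
  "c \<in> {2..n+1} \<Longrightarrow> {u \<in> {0..n+3}. adj (K2_triangle n) c u} = {0, 1}"
  "{u \<in> {0..n+3}. adj (K2_triangle n) (n+2) u} = {0, n+3}"
  "{u \<in> {0..n+3}. adj (K2_triangle n) (n+3) u} = {0, n+2}"
  by (auto simp: adj_def K2_triangle_def doubleton_in_K2_iff doubleton_eq_iff)

text \<open>With \<open>x\<^sub>0 = 1\<close> and the values \<open>q\<close> at hub 1, \<open>y\<close> at the leaves of \<open>K\<^sub>2\<^sub>,\<^sub>n\<close> and \<open>t\<close> on the
  triangle, the eigen-equations \<open>r y = 1 + q\<close>, \<open>r q = n y\<close>, \<open>r t = 1 + t\<close> determine \<open>q, y, t\<close>,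
  and the remaining equation \<open>r = n y + 2 t\<close> at hub 0, multiplied by \<open>(r\<^sup>2 - n)(r - 1)\<close>,
  is the vanishing of this quartic.\<close>
definition K2_triangle_poly :: "nat \<Rightarrow> real \<Rightarrow> real" where
  "K2_triangle_poly n r = r * (r*r - n) * (r - 1) - n * r * (r - 1) - 2 * (r*r - n)"

lemma adj_eigenvalue_K2_triangle:
  fixes r :: real
  assumes "r > 1" "r * r > n" "K2_triangle_poly n r = 0"
  shows "adj_eigenvalue {0..n+3} (K2_triangle n) r"
proof -
  define y where "y = r / (r*r - n)"
  define q where "q = n / (r*r - n)"
  define t where "t = 1 / (r - 1)"
  define x where "x = (\<lambda>v::nat. if v = 0 then 1 else if v = 1 then q else if v \<le> n+1 then y else t)"
  have nonzero: "r*r - n \<noteq> 0" "r - 1 \<noteq> 0" using assms(1,2) by auto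
  have leaves: "(\<Sum>u\<in>{2..n+1}. x u) = n * y"
    using sum.cong[of "{2..n+1}" _ x "\<lambda>_. y"] by (simp add: x_def)
  have "(\<Sum>u\<in>{u\<in>{0..n+3}. adj (K2_triangle n) v u}. x u) = r * x v" if v: "v \<in> {0..n+3}" for v
  proof -
    consider "v = 0" | "v = 1" | "v \<in> {2..n+1}" | "v = n+2" | "v = n+3" using v by fastforce
    thus ?thesis
    proof cases
      case 1
      have "{2..n+3} = {2..n+1} \<union> {n+2, n+3}" by auto
      hence "(\<Sum>u\<in>{2..n+3}. x u) = n * y + 2 * t"
        by (simp add: sum.union_disjoint leaves x_def)
      also have "\<dots> = (n * r * (r - 1) + 2 * (r*r - n)) / ((r*r - n) * (r - 1))"
        using nonzero unfolding y_def t_def by (simp add: field_simps)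
      also have "n * r * (r - 1) + 2 * (r*r - n) = r * ((r*r - n) * (r - 1))"
        using assms(3) unfolding K2_triangle_poly_def by (simp add: algebra_simps)
      also have "\<dots> / ((r*r - n) * (r - 1)) = r" using nonzero by simp
      finally show ?thesis unfolding 1 K2_triangle_neighbours(1) by (simp add: x_def)
    next
      case 2
      show ?thesis unfolding 2 K2_triangle_neighbours(2) leaves by (simp add: x_def y_def q_def)
    next
      case 3
      have "1 + q = r * y" using nonzero unfolding y_def q_def by (simp add: field_simps)
      thus ?thesis unfolding K2_triangle_neighbours(3)[OF 3] using 3 by (auto simp: x_def)
    next
      case 4
      have "1 + t = r * t" using nonzero unfolding t_def by (simp add: field_simps)
      thus ?thesis unfolding 4 K2_triangle_neighbours(4) by (simp add: x_def)
    next
      case 5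
      have "1 + t = r * t" using nonzero unfolding t_def by (simp add: field_simps)
      thus ?thesis unfolding 5 K2_triangle_neighbours(5) by (simp add: x_def)
    qed
  qed
  moreover have "x 0 \<noteq> 0" by (simp add: x_def)
  ultimately show ?thesis unfolding adj_eigenvalue_def by (intro exI[of _ x]) force
qed

lemma K2_triangle_poly_root_gt:
  assumes "1 \<le> n"
  obtains r where "r > sqrt (2*n + 1)" "K2_triangle_poly n r = 0"
proof -
  define b :: real where "b = 2*n + 1"
  define s where "s = sqrt b"
  have b: "b \<ge> 3" "2 * real n = b - 1" using assms by (simp_all add: b_def)
  have s: "s * s = b" "s \<ge> 1" by (simp_all add: s_def b_def)
  have "K2_triangle_poly n s = s * (n + 1) * (s - 1) - n * s * (s - 1) - 2 * (n + 1)"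
    unfolding K2_triangle_poly_def s(1) by (simp add: b_def)
  also have "\<dots> = s * s - s - 2 * n - 2" by (simp add: algebra_simps)
  finally have neg: "K2_triangle_poly n s < 0" using s b by simp
  have "K2_triangle_poly n b = b * (b - 1) * (b * b - 2 * n) - 2 * (b * b) + 2 * n"
    unfolding K2_triangle_poly_def by (simp add: algebra_simps)
  moreover have "b * 2 * b \<le> b * (b - 1) * (b * b - 2 * n)"
  proof (intro mult_mono)
    have "3 * b \<le> b * b" using b(1) by (intro mult_right_mono) auto
    thus "b \<le> b * b - 2 * n" using b by linarith
  qed (use b in auto)
  ultimately have nonneg: "K2_triangle_poly n b \<ge> 0" by simp
  have "s \<le> b" using s mult_left_mono[of 1 s s] by simp
  moreover have "continuous_on {s..b} (K2_triangle_poly n)"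
    unfolding K2_triangle_poly_def by (intro continuous_intros)
  ultimately obtain r where "s \<le> r" "r \<le> b" "K2_triangle_poly n r = 0"
    using IVT'[of "K2_triangle_poly n" s 0 b] neg nonneg by auto
  moreover have "r \<noteq> s" using neg \<open>K2_triangle_poly n r = 0\<close> by auto
  ultimately have "s < r" "K2_triangle_poly n r = 0" by auto
  thus ?thesis by (intro that[of r]) (simp_all add: s_def b_def add.commute)
qed

lemma exists_minimally_two_edge_connected_eigenvalue_gt:
  assumes "m \<ge> 6"
  obtains V E r where "finite V" "minimally_two_edge_connected V E" "card E = m"
    "adj_eigenvalue V E r" "r > sqrt (real m - 2)"
proof (cases "even m")
  case True
  then obtain k where m: "m = 2 * k" by (auto elim: evenE)
  show ?thesis
  proof (rule that)
    show "minimally_two_edge_connected {0..k+1} (K2 k)"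
      using assms m by (intro minimally_two_edge_connected_K2) simp
    show "card (K2 k) = m" using m by (simp add: card_K2)
    show "adj_eigenvalue {0..k+1} (K2 k) (sqrt (2 * k))"
      using assms m by (intro adj_eigenvalue_K2) simp
    show "sqrt (real m - 2) < sqrt (2 * k)" using m by simp
  qed simp
next
  case False
  obtain n where m: "m = 2 * n + 3"
  proof -
    from False obtain j where "m = 2 * j + 1" by (auto elim: oddE)
    with assms show ?thesis by (intro that[of "j - 1"]) linarith
  qed
  have n: "2 \<le> n" using assms m by simp
  hence "1 \<le> n" by simp
  then obtain r where r: "r > sqrt (2 * real n + 1)" "K2_triangle_poly n r = 0"
    by (rule K2_triangle_poly_root_gt)
  have sqrt_ge_1: "1 \<le> sqrt (2 * real n + 1)" by simp
  hence "1 < r" using r(1) by linarith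
  have "sqrt (2 * real n + 1) * sqrt (2 * real n + 1) < r * r"
    using r(1) sqrt_ge_1 \<open>1 < r\<close> by (intro mult_strict_mono) auto
  hence "n < r * r" by simp
  show ?thesis
  proof (rule that)
    show "minimally_two_edge_connected {0..n+3} (K2_triangle n)"
      using n by (rule minimally_two_edge_connected_K2_triangle)
    show "card (K2_triangle n) = m" using m by (simp add: card_K2_triangle)
    show "adj_eigenvalue {0..n+3} (K2_triangle n) r"
      using \<open>1 < r\<close> \<open>n < r * r\<close> r(2) by (rule adj_eigenvalue_K2_triangle)
    have "real m - 2 = 2 * real n + 1" using m by simp
    thus "sqrt (real m - 2) < r" using r(1) by (simp only:)
  qed simp
qed

theorem lemma2p10:
  fixes m :: nat and V :: "nat set" and E :: "nat set set"
  assumes "m \<ge> 6"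
    and "minimally_two_edge_connected V E" and "card E = m"
    and "\<forall>W F. minimally_two_edge_connected W F \<and> card F = m \<longrightarrow>
           spectral_radius W F \<le> spectral_radius V E"
  shows "spectral_radius V E > sqrt (real m - 2)"
proof -
  obtain W F r where W: "finite W" "minimally_two_edge_connected W F" "card F = m"
    and r: "adj_eigenvalue W F r" "r > sqrt (real m - 2)"
    using exists_minimally_two_edge_connected_eigenvalue_gt[OF assms(1)] .
  have "r \<le> spectral_radius W F" by (rule adj_eigenvalue_le_spectral_radius[OF W(1) r(1)])
  also have "\<dots> \<le> spectral_radius V E" using assms(4) W(2,3) by blast
  finally show ?thesis using r(2) by linarith
qed

end
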